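(* Let $S_2=\mathrm{span}\langle e,f\rangle$ be the two-dimensional Lie triple system with $[e,f,e]=2e$, $[e,f,f]=-2f$, over a field of characteristic zero, and let $U(S_2)$ be its universal enveloping algebra. Then for all $n\ge 0$, $$(e^n,f,f)\,e=n\,e^nf-n(n-1)\,e^{n-1},$$ where $(x,y,z)=(xy)z-x(yz)$ and $e^nf$ denotes the product of $e^n$ with $f$.
   Context: A Lie triple system (L.t.s.) is a vector space $T$ with a trilinear product $[x,y,z]$ satisfying $[x,x,y]=0$, $[x,y,z]+[y,z,x]+[z,x,y]=0$, and $[a,b,[x,y,z]]=[[a,b,x],y,z]+[x,[a,b,y],z]+[x,y,[a,b,z]]$; the product on $S_2$ is determined by the given values together with these identities. For a unital nonassociative algebra $A$, $\mathrm{LN_{alt}}(A)=\{a\in A : (a,x,y)=-(x,a,y)\ \forall x,y\in A\}$ is an L.t.s. with $[a,b,c]=a(bc)-b(ac)-c(ab)+c(ba)$. The universal enveloping algebra $U(T)$ is the unital algebra with an L.t.s. monomorphism $T\to\mathrm{LN_{alt}}(U(T))$ (elements of $T$ identified with their images) such that $ab=ba$ for $a,b\in T$, universal for L.t.s. homomorphisms into $\mathrm{LN_{alt}}(A)$ with this commutation property. For $c\in T$ the subalgebra generated by $c$ is associative, so $c^n$ is well defined ($c^0=1$); for $n=0$ the term $n(n-1)e^{n-1}$ is $0$. *)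

theory Defs
  imports Main
begin

locale unital_algebra =
  fixes smul :: "'k::field \<Rightarrow> 'a::ab_group_add \<Rightarrow> 'a"
    and mul :: "'a \<Rightarrow> 'a \<Rightarrow> 'a"
    and one :: 'a
  assumes smul_add_right: "smul c (x + y) = smul c x + smul c y"
      and smul_add_left: "smul (c + d) x = smul c x + smul d x"
      and smul_smul: "smul c (smul d x) = smul (c * d) x"
      and smul_one: "smul 1 x = x"
      and mul_add_left: "mul (x + y) z = mul x z + mul y z"
      and mul_add_right: "mul x (y + z) = mul x y + mul x z"
      and mul_smul_left: "mul (smul c x) y = smul c (mul x y)"
      and mul_smul_right: "mul x (smul c y) = smul c (mul x y)"
      and mul_one_left: "mul one x = x"
      and mul_one_right: "mul x one = x"

definition nassoc :: "('a::ab_group_add \<Rightarrow> 'a \<Rightarrow> 'a) \<Rightarrow> 'a \<Rightarrow> 'a \<Rightarrow> 'a \<Rightarrow> 'a" where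
  "nassoc mul x y z = mul (mul x y) z - mul x (mul y z)"

definition LN_alt :: "('a::ab_group_add \<Rightarrow> 'a \<Rightarrow> 'a) \<Rightarrow> 'a set" where
  "LN_alt mul = {a. \<forall>x y. nassoc mul a x y = - nassoc mul x a y}"

definition ltsb :: "('a::ab_group_add \<Rightarrow> 'a \<Rightarrow> 'a) \<Rightarrow> 'a \<Rightarrow> 'a \<Rightarrow> 'a \<Rightarrow> 'a" where
  "ltsb mul a b c = mul a (mul b c) - mul b (mul a c) - mul c (mul a b) + mul c (mul b a)"

primrec npow :: "('a \<Rightarrow> 'a \<Rightarrow> 'a) \<Rightarrow> 'a \<Rightarrow> 'a \<Rightarrow> nat \<Rightarrow> 'a" where
  "npow mul one c 0 = one"
| "npow mul one c (Suc n) = mul c (npow mul one c n)"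

end

theory Submission
  imports Defs
begin

text \<open>Since e and f commute and lie in LN_alt, the map D x = [e,f,x] = e(fx) - f(ex) is a
  derivation of the algebra with D e = 2e and D f = -2f, and left multiplication by e^n is the
  n-th power of left multiplication by e. Hence D e^n = 2n e^n, and moving f past e^n gives the
  sl_2-type relation f e^n = e^n f - n(n-1) e^(n-1). Both the associator (e^n,f,f) and the
  product (e^(n-1) f) e are then computed from the linearised identity (fx + xf)y = f(xy) + x(fy),
  which determines twice each of them; halving gives the formula.\<close>

lemma npow_eq_funpow: "npow mul one a n = (mul a ^^ n) one"
  by (induction n) simp_all

context unital_algebra
begin

lemma smul_zero_right [simp]: "smul c 0 = 0"
  using smul_add_right [of c 0 0] by simp

lemma smul_zero_left [simp]: "smul 0 x = 0"
  using smul_add_left [of 0 0 x] by simp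

lemma smul_minus_right: "smul c (- x) = - smul c x"
  using smul_add_right [of c x "- x"] by (simp add: add_eq_0_iff2 minus_unique)

lemma smul_minus_left: "smul (- c) x = - smul c x"
  using smul_add_left [of c "- c" x] by (simp add: add_eq_0_iff2 minus_unique)

lemma smul_diff_right: "smul c (x - y) = smul c x - smul c y"
  using smul_add_right [of c x "- y"] by (simp add: smul_minus_right)

lemma smul_diff_left: "smul (c - d) x = smul c x - smul d x"
  using smul_add_left [of c "- d" x] by (simp add: smul_minus_left)

lemma mul_zero_left [simp]: "mul 0 x = 0"
  using mul_add_left [of 0 0 x] by simp

lemma mul_zero_right [simp]: "mul x 0 = 0"
  using mul_add_right [of x 0 0] by simp

lemma mul_minus_left: "mul (- x) y = - mul x y"
  using mul_add_left [of x "- x" y] by (simp add: add_eq_0_iff2 minus_unique)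

lemma mul_minus_right: "mul x (- y) = - mul x y"
  using mul_add_right [of x y "- y"] by (simp add: add_eq_0_iff2 minus_unique)

lemma mul_diff_left: "mul (x - y) z = mul x z - mul y z"
  using mul_add_left [of x "- y" z] by (simp add: mul_minus_left)

lemma mul_diff_right: "mul x (y - z) = mul x y - mul x z"
  using mul_add_right [of x y "- z"] by (simp add: mul_minus_right)

lemma smul_two: "smul 2 x = x + x"
  using smul_add_left [of 1 1 x] by (simp add: smul_one one_add_one)

lemma npow_Suc_0 [simp]: "npow mul one a (Suc 0) = a"
  by (simp add: mul_one_right)

lemma LN_altD:
  assumes "a \<in> LN_alt mul"
  shows "mul (mul a x + mul x a) y = mul a (mul x y) + mul x (mul a y)"
proof -
  have "nassoc mul a x y = - nassoc mul x a y"
    using assms by (simp add: LN_alt_def)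
  then show ?thesis
    by (simp add: nassoc_def mul_add_left algebra_simps)
qed

lemma ltsb_commuting:
  assumes "mul a b = mul b a"
  shows "ltsb mul a b x = mul a (mul b x) - mul b (mul a x)"
  using assms by (simp add: ltsb_def)

lemma ltsb_derivation:
  assumes a: "a \<in> LN_alt mul" and b: "b \<in> LN_alt mul" and ab: "mul a b = mul b a"
  shows "ltsb mul a b (mul x y) = mul (ltsb mul a b x) y + mul x (ltsb mul a b y)"
proof -
  let ?D = "\<lambda>z. mul a (mul b z) - mul b (mul a z)"
  \<comment> \<open>By the LN_alt identities w z = D (x z) - x (D z); take z = 1 to get w = D x.\<close>
  define w where "w = mul a (mul b x + mul x b) + mul (mul b x + mul x b) a
    - (mul b (mul a x + mul x a) + mul (mul a x + mul x a) b)"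
  have w_mul: "mul w z = ?D (mul x z) - mul x (?D z)" for z
    unfolding w_def mul_diff_left LN_altD [OF a, of "mul b x + mul x b"]
      LN_altD [OF b, of "mul a x + mul x a"] LN_altD [OF a, of x z] LN_altD [OF b, of x z]
      LN_altD [OF a, of x "mul b z"] LN_altD [OF b, of x "mul a z"]
    by (simp add: mul_add_right mul_diff_right)
  have "?D one = 0"
    using ab by (simp add: mul_one_right)
  then have "w = ?D x"
    using w_mul [of one] by (simp add: mul_one_right)
  then show ?thesis
    using w_mul [of y] ab by (simp add: ltsb_commuting)
qed

end

locale unital_algebra_char_ne_2 = unital_algebra smul mul one
  for smul :: "'k::field \<Rightarrow> 'a::ab_group_add \<Rightarrow> 'a" and mul one +
  assumes two_neq_zero: "(2::'k) \<noteq> 0"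
begin

lemma double_cancel:
  fixes x y :: 'a
  assumes "x + x = y + y"
  shows "x = y"
proof -
  have "z = smul (1 / 2) (z + z)" for z
    using two_neq_zero by (simp add: smul_two [symmetric] smul_smul smul_one)
  then show ?thesis
    using assms by metis
qed

context
  fixes a :: 'a
  assumes a: "a \<in> LN_alt mul"
begin

lemma mul_npow_eq_funpow: "mul (npow mul one a n) y = (mul a ^^ n) y"
proof (induction n arbitrary: y)
  case 0
  show ?case by (simp add: mul_one_left)
next
  case (Suc n)
  have "mul (npow mul one a n) a = (mul a ^^ Suc n) one"
    using Suc [of a] by (simp add: mul_one_right funpow_Suc_right del: funpow.simps)
  then have npow_a: "mul (npow mul one a n) a = npow mul one a (Suc n)"
    by (simp only: npow_eq_funpow)
  have "mul (npow mul one a (Suc n)) y + mul (npow mul one a (Suc n)) y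
      = mul a (mul (npow mul one a n) y) + mul (npow mul one a n) (mul a y)"
    using LN_altD [OF a, of "npow mul one a n" y] by (simp add: npow_a mul_add_left)
  also have "\<dots> = (mul a ^^ Suc n) y + (mul a ^^ Suc n) y"
    by (simp add: Suc funpow_swap1)
  finally show ?case
    by (rule double_cancel)
qed

lemma mul_npow_Suc_left: "mul (npow mul one a (Suc n)) x = mul a (mul (npow mul one a n) x)"
  unfolding mul_npow_eq_funpow by simp

lemma mul_npow_Suc_right: "mul (npow mul one a (Suc n)) x = mul (npow mul one a n) (mul a x)"
  unfolding mul_npow_eq_funpow by (simp add: funpow_swap1)

lemma npow_mul_right: "mul (npow mul one a n) a = npow mul one a (Suc n)"
  using mul_npow_Suc_right [of n one] by (simp add: mul_one_right mul_one_left)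

end

end

locale S2_in_LN_alt = unital_algebra_char_ne_2 smul mul one
  for smul :: "'k::field \<Rightarrow> 'a::ab_group_add \<Rightarrow> 'a" and mul one +
  fixes e f :: 'a
  assumes e_LN_alt: "e \<in> LN_alt mul" and f_LN_alt: "f \<in> LN_alt mul"
    and mul_e_f_commute: "mul e f = mul f e"
    and ltsb_e_f_e: "ltsb mul e f e = smul 2 e"
    and ltsb_e_f_f: "ltsb mul e f f = - smul 2 f"
begin

abbreviation epow :: "nat \<Rightarrow> 'a" where
  "epow n \<equiv> npow mul one e n"

declare npow.simps(2) [simp del]

lemma ltsb_e_f_epow: "ltsb mul e f (epow n) = smul (2 * of_nat n) (epow n)"
proof (induction n)
  case 0
  show ?case by (simp add: ltsb_commuting mul_e_f_commute mul_one_right)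
next
  case (Suc n)
  have "ltsb mul e f (epow (Suc n))
      = mul (smul 2 e) (epow n) + mul e (smul (2 * of_nat n) (epow n))"
    by (simp add: npow.simps(2) ltsb_derivation e_LN_alt f_LN_alt mul_e_f_commute ltsb_e_f_e Suc)
  also have "\<dots> = smul (2 * of_nat (Suc n)) (epow (Suc n))"
    by (simp add: npow.simps(2) mul_smul_left mul_smul_right smul_add_left [symmetric]
        algebra_simps)
  finally show ?case .
qed

lemma f_mul_epow:
  "mul f (epow (Suc n)) = mul (epow (Suc n)) f - smul (of_nat (Suc n * n)) (epow n)"
proof (induction n)
  case 0
  show ?case by (simp add: mul_one_right mul_e_f_commute)
next
  case (Suc n)
  have "mul f (epow (Suc (Suc n)))
      = mul e (mul f (epow (Suc n))) - ltsb mul e f (epow (Suc n))"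
    by (simp add: npow.simps(2) ltsb_commuting mul_e_f_commute)
  also have "mul e (mul f (epow (Suc n)))
      = mul (epow (Suc (Suc n))) f - smul (of_nat (Suc n * n)) (epow (Suc n))"
    by (simp only: Suc mul_diff_right mul_smul_right
        mul_npow_Suc_left [OF e_LN_alt, symmetric] npow.simps(2) [symmetric])
  also have "ltsb mul e f (epow (Suc n)) = smul (2 * of_nat (Suc n)) (epow (Suc n))"
    by (rule ltsb_e_f_epow)
  also have "mul (epow (Suc (Suc n))) f - smul (of_nat (Suc n * n)) (epow (Suc n))
      - smul (2 * of_nat (Suc n)) (epow (Suc n))
      = mul (epow (Suc (Suc n))) f - smul (of_nat (Suc (Suc n) * Suc n)) (epow (Suc n))"
    by (simp only: diff_diff_eq smul_add_left [symmetric]) (simp add: algebra_simps)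
  finally show ?case .
qed

lemma epow_f_mul_e: "mul (mul (epow n) f) e = mul (epow (Suc n)) f - smul (of_nat n) (epow n)"
proof (cases n)
  case 0
  then show ?thesis by (simp add: mul_one_left mul_one_right mul_e_f_commute)
next
  case (Suc m)
  let ?x = "mul (epow n) f"
    and ?c = "of_nat (Suc m * m)" and ?c' = "of_nat (Suc (Suc m) * Suc m)"
  have "mul (mul f (epow n) + mul (epow n) f) e
      = mul f (mul (epow n) e) + mul (epow n) (mul f e)"
    by (rule LN_altD [OF f_LN_alt])
  then have "mul ?x e + mul ?x e - smul ?c (epow n)
      = mul (epow (Suc n)) f - smul ?c' (epow n) + mul (epow (Suc n)) f"
    by (simp add: Suc f_mul_epow mul_add_left mul_diff_left mul_smul_left
        npow_mul_right [OF e_LN_alt] mul_e_f_commute [symmetric]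
        mul_npow_Suc_right [OF e_LN_alt, symmetric] algebra_simps)
  moreover have "smul ?c' (epow n)
      = smul ?c (epow n) + smul (of_nat n) (epow n) + smul (of_nat n) (epow n)"
    by (simp add: Suc smul_add_left [symmetric] algebra_simps)
  ultimately have "mul ?x e + mul ?x e
      = (mul (epow (Suc n)) f - smul (of_nat n) (epow n))
        + (mul (epow (Suc n)) f - smul (of_nat n) (epow n))"
    by (simp add: algebra_simps)
  then show ?thesis
    by (rule double_cancel)
qed

lemma f_mul_epow_f:
  "mul f (mul (epow (Suc n)) f) - mul (epow (Suc n)) (mul f f)
    = smul (of_nat (Suc n) * (2 - of_nat n)) (mul (epow n) f)"
proof (induction n)
  case 0
  show ?case
    using ltsb_e_f_f
    by (simp add: ltsb_commuting mul_e_f_commute mul_one_left mul_one_right smul_two algebra_simps)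
next
  case (Suc n)
  let ?y = "mul (epow (Suc n)) f"
  have "mul f (mul (epow (Suc (Suc n))) f) - mul (epow (Suc (Suc n))) (mul f f)
      = mul e (mul f ?y - mul (epow (Suc n)) (mul f f)) - ltsb mul e f ?y"
    by (simp add: mul_npow_Suc_left [OF e_LN_alt] ltsb_commuting mul_e_f_commute
        mul_diff_right)
  also have "mul e (mul f ?y - mul (epow (Suc n)) (mul f f))
      = smul (of_nat (Suc n) * (2 - of_nat n)) ?y"
    by (simp only: Suc mul_smul_right mul_npow_Suc_left [OF e_LN_alt, symmetric])
  also have "ltsb mul e f ?y = smul (2 * of_nat (Suc n)) ?y - smul 2 ?y"
    by (simp add: ltsb_derivation e_LN_alt f_LN_alt mul_e_f_commute ltsb_e_f_epow ltsb_e_f_f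
        mul_smul_left mul_smul_right mul_minus_right)
  also have "smul (of_nat (Suc n) * (2 - of_nat n)) ?y
      - (smul (2 * of_nat (Suc n)) ?y - smul 2 ?y)
      = smul (of_nat (Suc (Suc n)) * (2 - of_nat (Suc n))) ?y"
    by (simp add: smul_diff_left [symmetric] algebra_simps)
  finally show ?case .
qed

lemma nassoc_epow_f_f: "nassoc mul (epow (Suc n)) f f = smul (of_nat (Suc n)) (mul (epow n) f)"
proof -
  let ?x = "epow (Suc n)" and ?y = "mul (epow n) f"
  have "nassoc mul f ?x f = - nassoc mul ?x f f"
    using f_LN_alt by (simp add: LN_alt_def)
  then have "nassoc mul ?x f f + nassoc mul ?x f f
      = smul (of_nat (Suc n * n)) ?y + (mul f (mul ?x f) - mul ?x (mul f f))"
    by (simp add: nassoc_def f_mul_epow mul_diff_left mul_smul_left algebra_simps)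
  also have "\<dots> = smul (of_nat (Suc n)) ?y + smul (of_nat (Suc n)) ?y"
    by (simp add: f_mul_epow_f smul_add_left [symmetric] algebra_simps)
  finally show ?thesis
    by (rule double_cancel)
qed

lemma nassoc_epow_f_f_mul_e:
  "mul (nassoc mul (epow n) f f) e
    = smul (of_nat n) (mul (epow n) f) - smul (of_nat (n * (n - 1))) (epow (n - 1))"
proof (cases n)
  case 0
  then show ?thesis by (simp add: nassoc_def mul_one_left)
next
  case (Suc m)
  then show ?thesis
    by (simp add: nassoc_epow_f_f mul_smul_left epow_f_mul_e smul_diff_right smul_smul
        algebra_simps)
qed

end

theorem mainTheorem5:
  fixes smul :: "'k::field_char_0 \<Rightarrow> 'a::ab_group_add \<Rightarrow> 'a"
    and mul :: "'a \<Rightarrow> 'a \<Rightarrow> 'a"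
    and one :: 'a
    and e f :: 'a
  assumes "unital_algebra smul mul one"
      and "e \<in> LN_alt mul" and "f \<in> LN_alt mul"
      and "mul e f = mul f e"
      and "ltsb mul e f e = smul 2 e"
      and "ltsb mul e f f = - smul 2 f"
  shows "\<forall>n::nat. mul (nassoc mul (npow mul one e n) f f) e
           = smul (of_nat n) (mul (npow mul one e n) f)
             - smul (of_nat (n * (n - 1))) (npow mul one e (n - 1))"
proof -
  interpret S2_in_LN_alt smul mul one e f
    using assms by (simp add: S2_in_LN_alt_def S2_in_LN_alt_axioms_def
        unital_algebra_char_ne_2_def unital_algebra_char_ne_2_axioms_def)
  show ?thesis
    using nassoc_epow_f_f_mul_e by blast
qed

end
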